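(* Let $0\le\alpha<2\pi$, $0\le\beta<\pi/2$, and let $\{a_k\}_{k\in\mathbb Z}$ be a sequence of complex numbers with $a_k=0$ for all $k\le0$, such that $\{a_k\}_{k\ge1}\in\mathrm{GM}$ and $a_k\in S_{\alpha,\beta}$ for all $k\ge1$. Then $\{a_k\}_{k\in\mathbb Z}\in\overline{\mathrm{GM}}$.
   Context: $S_{\alpha,\beta}=\{z\in\mathbb C: z=0\text{ or }|\arg z-\alpha|\le\beta\}$. A sequence $\{a_k\}_{k\ge1}$ belongs to $\mathrm{GM}$ if there exist $C>0$ and $\lambda>1$ such that for every $n\ge1$, $\sum_{k=n}^{2n}|a_k-a_{k+1}|\le\frac Cn\sum_{n/\lambda\le k\le\lambda n}|a_k|$. For a two-sided sequence $a$: $|\Delta a_k|=|a_k-a_{k+1}|$ for $k>0$, $|\Delta a_k|=|a_k-a_{k-1}|$ for $k<0$, $|\Delta a_0|=|a_0-a_1|+|a_0-a_{-1}|$; for $k\ge0$, $\widehat a_{2^k}=\sup_{2^k\le|m|<2^{k+1}}\frac1{|m|+1}|\sum_{j=0}^ma_j|$, where for $m<0$, $\sum_{j=0}^ma_j$ means $\sum_{j=m}^0a_j$; $[\cdot]$ is the floor function. The sequence $a$ belongs to $\overline{\mathrm{GM}}$ if there is $C'>0$ such that for every $n\ge0$, $\sum_{[2^{n-1}]\le|m|<2^n}|\Delta a_m|\le C'\sup_{k\in\mathbb N_0}\min(1,2^{k-n})\widehat a_{2^k}$. *)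

theory Defs
  imports "HOL-Analysis.Analysis"
begin

definition sector :: "real \<Rightarrow> real \<Rightarrow> complex set" where
  "sector \<alpha> \<beta> = {z. z = 0 \<or> (\<exists>\<theta>. z = of_real (cmod z) * cis \<theta> \<and> \<bar>\<theta> - \<alpha>\<bar> \<le> \<beta>)}"

text \<open>General monotone sequences a_1, a_2, ... (index 0 unused).\<close>
definition GM :: "(nat \<Rightarrow> complex) \<Rightarrow> bool" where
  "GM a \<longleftrightarrow> (\<exists>C>0. \<exists>L>1. \<forall>n\<ge>1.
     (\<Sum>k=n..2*n. cmod (a k - a (k+1)))
       \<le> C / real n * (\<Sum>k\<in>{k. k \<ge> 1 \<and> real n / L \<le> real k \<and> real k \<le> L * real n}. cmod (a k)))"

definition absDelta :: "(int \<Rightarrow> complex) \<Rightarrow> int \<Rightarrow> real" where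
  "absDelta a k =
     (if k > 0 then cmod (a k - a (k+1))
      else if k < 0 then cmod (a k - a (k-1))
      else cmod (a 0 - a 1) + cmod (a 0 - a (-1)))"

definition psum :: "(int \<Rightarrow> complex) \<Rightarrow> int \<Rightarrow> complex" where
  "psum a m = (if m \<ge> 0 then (\<Sum>j\<in>{0..m}. a j) else (\<Sum>j\<in>{m..0}. a j))"

definition ahat :: "(int \<Rightarrow> complex) \<Rightarrow> nat \<Rightarrow> real" where
  "ahat a k = Sup ((\<lambda>m. cmod (psum a m) / (real_of_int \<bar>m\<bar> + 1)) `
                   {m::int. 2^k \<le> \<bar>m\<bar> \<and> \<bar>m\<bar> < 2^(k+1)})"

definition GMbar :: "(int \<Rightarrow> complex) \<Rightarrow> bool" where
  "GMbar a \<longleftrightarrow> (\<exists>C'>0. \<forall>n::nat.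
     ereal (\<Sum>m\<in>{m::int. \<lfloor>(2::real) powr (real n - 1)\<rfloor> \<le> \<bar>m\<bar> \<and> \<bar>m\<bar> < 2^n}. absDelta a m)
       \<le> ereal C' * (SUP k::nat. ereal (min 1 ((2::real) powr (real k - real n)) * ahat a k)))"

end

theory Submission
  imports Defs
begin

text \<open>In a sector of half-opening \<open>\<beta> < pi/2\<close> there is no cancellation:
  \<open>cos \<beta> * (\<Sum>|a k|) \<le> |\<Sum>a k|\<close>. Choosing \<open>2^p > \<lambda>\<close>, the GM condition on the block \<open>[N, 2N]\<close> with
  \<open>N = 2^j\<close> therefore bounds \<open>\<Sum>_{N\<le>k\<le>2N} |\<Delta>a k|\<close> by \<open>C / (N cos \<beta>) * |\<Sum>_{k\<le>2^p N} a k|\<close>, which is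
  at most a constant times the averaged partial sum \<open>ahat a (j + p)\<close>; as \<open>p \<ge> 1\<close>, the weight
  \<open>min 1 (2^(k - n))\<close> in the definition of \<open>GMbar\<close> is 1 for this \<open>k = j + p\<close> and \<open>n = j + 1\<close>.\<close>

lemma norm_mult_cos_le_Re_sector:
  assumes "z \<in> sector \<alpha> \<beta>" "0 \<le> \<beta>" "\<beta> \<le> pi"
  shows "cmod z * cos \<beta> \<le> Re (z * cis (-\<alpha>))"
proof (cases "z = 0")
  case False
  then obtain \<theta> where \<theta>: "z = of_real (cmod z) * cis \<theta>" "\<bar>\<theta> - \<alpha>\<bar> \<le> \<beta>"
    using assms(1) unfolding sector_def by auto
  have "z * cis (-\<alpha>) = of_real (cmod z) * cis (\<theta> - \<alpha>)"
    by (subst \<theta>(1)) (simp add: cis_mult mult.assoc)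
  then have Re_eq: "Re (z * cis (-\<alpha>)) = cmod z * cos (\<theta> - \<alpha>)" by simp
  have "cos \<beta> \<le> cos \<bar>\<theta> - \<alpha>\<bar>"
    by (rule cos_monotone_0_pi_le) (use \<theta>(2) assms(3) in auto)
  then show ?thesis unfolding Re_eq by (simp add: mult_left_mono)
qed simp

lemma sum_norm_mult_cos_le_norm_sum_sector:
  assumes "\<And>k. k \<in> A \<Longrightarrow> z k \<in> sector \<alpha> \<beta>" "0 \<le> \<beta>" "\<beta> \<le> pi"
  shows "(\<Sum>k\<in>A. cmod (z k)) * cos \<beta> \<le> cmod (\<Sum>k\<in>A. z k)"
proof -
  have "(\<Sum>k\<in>A. cmod (z k)) * cos \<beta> = (\<Sum>k\<in>A. cmod (z k) * cos \<beta>)"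
    by (simp add: sum_distrib_right)
  also have "\<dots> \<le> (\<Sum>k\<in>A. Re (z k * cis (-\<alpha>)))"
    by (intro sum_mono norm_mult_cos_le_Re_sector) (use assms in auto)
  also have "\<dots> = Re ((\<Sum>k\<in>A. z k) * cis (-\<alpha>))"
    by (simp add: sum_distrib_right)
  also have "\<dots> \<le> cmod ((\<Sum>k\<in>A. z k) * cis (-\<alpha>))"
    by (rule complex_Re_le_cmod)
  also have "\<dots> = cmod (\<Sum>k\<in>A. z k)"
    by (simp add: norm_mult)
  finally show ?thesis .
qed

lemma GM_sector_block_bound:
  assumes "GM b" "\<And>k. k \<ge> 1 \<Longrightarrow> b k \<in> sector \<alpha> \<beta>" "0 \<le> \<beta>" "\<beta> < pi / 2"
  obtains C p where "C > 0" "p > 0"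
    "\<And>n. n \<ge> 1 \<Longrightarrow> (\<Sum>k=n..2*n. cmod (b k - b (k+1))) \<le> C / real n * cmod (\<Sum>k=1..2^p*n. b k)"
proof -
  obtain C L where "C > 0" "L > 1" and GM_ineq: "\<And>n. n \<ge> 1 \<Longrightarrow>
     (\<Sum>k=n..2*n. cmod (b k - b (k+1)))
       \<le> C / real n * (\<Sum>k\<in>{k. k \<ge> 1 \<and> real n / L \<le> real k \<and> real k \<le> L * real n}. cmod (b k))"
    using assms(1) unfolding GM_def by blast
  obtain p where p: "L < 2 ^ p" using real_arch_pow[of 2 L] by auto
  with \<open>L > 1\<close> have "p > 0" by (cases p) auto
  have cos_pos: "cos \<beta> > 0" using assms(3,4) by (intro cos_gt_zero_pi) auto
  show thesis
  proof (rule that[of "C / cos \<beta>" p])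
    fix n :: nat assume "n \<ge> 1"
    have window: "{k. k \<ge> 1 \<and> real n / L \<le> real k \<and> real k \<le> L * real n} \<subseteq> {1..2^p*n}"
    proof
      fix k assume k: "k \<in> {k. k \<ge> 1 \<and> real n / L \<le> real k \<and> real k \<le> L * real n}"
      then have "real k \<le> L * real n" by simp
      also have "\<dots> \<le> real (2^p * n)" using p by (simp add: mult_right_mono)
      finally show "k \<in> {1..2^p*n}" using k by (simp only: of_nat_le_iff) simp
    qed
    have "(\<Sum>k\<in>{k. k \<ge> 1 \<and> real n / L \<le> real k \<and> real k \<le> L * real n}. cmod (b k))
        \<le> (\<Sum>k=1..2^p*n. cmod (b k))"
      by (rule sum_mono2[OF _ window]) auto
    also have "\<dots> \<le> cmod (\<Sum>k=1..2^p*n. b k) / cos \<beta>"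
      using sum_norm_mult_cos_le_norm_sum_sector[of "{1..2^p*n}" b \<alpha> \<beta>] assms(2-4) cos_pos
      by (simp add: pos_le_divide_eq)
    finally have "C / real n * (\<Sum>k\<in>{k. k \<ge> 1 \<and> real n / L \<le> real k \<and> real k \<le> L * real n}. cmod (b k))
        \<le> C / real n * (cmod (\<Sum>k=1..2^p*n. b k) / cos \<beta>)"
      using \<open>C > 0\<close> by (intro mult_left_mono) auto
    with GM_ineq[OF \<open>n \<ge> 1\<close>]
    show "(\<Sum>k=n..2*n. cmod (b k - b (k+1))) \<le> C / cos \<beta> / real n * cmod (\<Sum>k=1..2^p*n. b k)"
      by (simp add: ac_simps)
  qed (use \<open>C > 0\<close> \<open>p > 0\<close> cos_pos in auto)
qed

definition dyadic_block :: "nat \<Rightarrow> int set" where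
  "dyadic_block n = {m. \<lfloor>(2::real) powr (real n - 1)\<rfloor> \<le> \<bar>m\<bar> \<and> \<bar>m\<bar> < 2^n}"

lemma dyadic_block_0: "dyadic_block 0 = {0}"
proof -
  have "\<lfloor>(2::real) powr (real 0 - 1)\<rfloor> = 0" by (simp add: powr_minus_divide)
  then show ?thesis by (auto simp: dyadic_block_def)
qed

lemma dyadic_block_Suc: "dyadic_block (Suc j) = {m. 2^j \<le> \<bar>m\<bar> \<and> \<bar>m\<bar> < 2^Suc j}"
proof -
  have "\<lfloor>(2::real) powr (real (Suc j) - 1)\<rfloor> = 2^j" by (simp add: powr_realpow)
  then show ?thesis unfolding dyadic_block_def by simp
qed

lemma sum_absDelta_dyadic_block_Suc_le:
  fixes a :: "int \<Rightarrow> complex"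
  assumes "\<And>k. k \<le> 0 \<Longrightarrow> a k = 0"
  shows "(\<Sum>m\<in>dyadic_block (Suc j). absDelta a m)
           \<le> (\<Sum>k=2^j..2*2^j. cmod (a (int k) - a (int (k+1))))"
proof -
  define f where "f m = (if m > 0 then cmod (a m - a (m+1)) else 0)" for m
  have finite_block: "finite (dyadic_block (Suc j))"
    by (rule finite_subset[of _ "{-(2^Suc j)..2^Suc j}"]) (auto simp: dyadic_block_Suc)
  have "(\<Sum>m\<in>dyadic_block (Suc j). absDelta a m) = (\<Sum>m\<in>dyadic_block (Suc j). f m)"
  proof (rule sum.cong)
    fix m assume "m \<in> dyadic_block (Suc j)"
    then have "m \<noteq> 0" by (auto simp: dyadic_block_Suc)
    then show "absDelta a m = f m" using assms[of m] assms[of "m-1"]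
      by (auto simp: absDelta_def f_def)
  qed simp
  also have "\<dots> = (\<Sum>m\<in>dyadic_block (Suc j) \<inter> {0<..}. f m)"
    by (rule sum.mono_neutral_right) (auto simp: finite_block f_def)
  also have "\<dots> \<le> (\<Sum>m\<in>int ` {2^j..2*2^j}. f m)"
  proof (rule sum_mono2)
    show "dyadic_block (Suc j) \<inter> {0<..} \<subseteq> int ` {2^j..2*2^j}"
    proof
      fix m assume m: "m \<in> dyadic_block (Suc j) \<inter> {0<..}"
      then have "m = int (nat m)" "nat m \<in> {2^j..2*2^j}"
        by (auto simp: dyadic_block_Suc nat_le_iff le_nat_iff)
      then show "m \<in> int ` {2^j..2*2^j}" by blast
    qed
  qed (auto simp: f_def)
  also have "\<dots> = (\<Sum>k=2^j..2*2^j. cmod (a (int k) - a (int (k+1))))"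
    by (auto simp: sum.reindex f_def add.commute intro!: sum.cong)
  finally show ?thesis .
qed

lemma psum_of_nat:
  assumes "a 0 = 0"
  shows "psum a (int B) = (\<Sum>k=1..B. a (int k))"
proof -
  have "psum a (int B) = (\<Sum>j\<in>int ` {0..B}. a j)"
    by (simp add: psum_def image_int_atLeastAtMost)
  also have "\<dots> = (\<Sum>k=0..B. a (int k))" by (simp add: sum.reindex)
  also have "\<dots> = (\<Sum>k=1..B. a (int k))" using assms by (simp add: sum.atLeast_Suc_atMost)
  finally show ?thesis .
qed

lemma norm_psum_div_le_ahat:
  assumes "2^k \<le> \<bar>m\<bar>" "\<bar>m\<bar> < 2^(k+1)"
  shows "cmod (psum a m) / (real_of_int \<bar>m\<bar> + 1) \<le> ahat a k"
proof -
  have "finite {m::int. 2^k \<le> \<bar>m\<bar> \<and> \<bar>m\<bar> < 2^(k+1)}"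
    by (rule finite_subset[of _ "{-(2^(k+1))..2^(k+1)}"]) auto
  then show ?thesis unfolding ahat_def by (intro cSup_upper) (use assms in auto)
qed

lemma ahat_nonneg: "0 \<le> ahat a k"
  by (rule order_trans[OF _ norm_psum_div_le_ahat[of k "2^k" a]]) auto

lemma norm_psum_power_le_ahat: "cmod (psum a (2^k)) \<le> (2^k + 1) * ahat a k"
proof -
  have "cmod (psum a (2^k)) / (2^k + 1) \<le> ahat a k"
    using norm_psum_div_le_ahat[of k "2^k" a] by simp
  then show ?thesis by (simp add: divide_le_eq add_pos_nonneg mult.commute)
qed

lemma sum_absDelta_dyadic_block_0_le_ahat:
  assumes "\<And>k. k \<le> 0 \<Longrightarrow> a k = 0"
  shows "(\<Sum>m\<in>dyadic_block 0. absDelta a m) \<le> 2 * ahat a 0"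
proof -
  have "(\<Sum>m\<in>dyadic_block 0. absDelta a m) = cmod (psum a (2^0))"
    using assms[of 0] assms[of "-1"] psum_of_nat[of a 1] by (simp add: dyadic_block_0 absDelta_def)
  also have "\<dots> \<le> 2 * ahat a 0"
    using norm_psum_power_le_ahat[of a 0] by simp
  finally show ?thesis .
qed

lemma sum_absDelta_dyadic_block_Suc_le_ahat:
  assumes "\<And>k. k \<le> 0 \<Longrightarrow> a k = 0" "C \<ge> 0"
    and GM_block: "(\<Sum>k=2^j..2*2^j. cmod (a (int k) - a (int (k+1))))
                     \<le> C / 2^j * cmod (\<Sum>k=1..2^p*2^j. a (int k))"
  shows "(\<Sum>m\<in>dyadic_block (Suc j). absDelta a m) \<le> 2 * 2^p * C * ahat a (p + j)"
proof -
  have "(\<Sum>m\<in>dyadic_block (Suc j). absDelta a m)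
      \<le> (\<Sum>k=2^j..2*2^j. cmod (a (int k) - a (int (k+1))))"
    by (rule sum_absDelta_dyadic_block_Suc_le[OF assms(1)])
  also have "\<dots> \<le> C / 2^j * cmod (psum a (2^(p+j)))"
    using GM_block psum_of_nat[of a "2^(p+j)"] assms(1) by (simp add: power_add mult.commute)
  also have "\<dots> \<le> C / 2^j * ((2^(p+j) + 1) * ahat a (p+j))"
    using assms(2) norm_psum_power_le_ahat by (intro mult_left_mono) auto
  also have "\<dots> \<le> C / 2^j * (2 * 2^p * 2^j * ahat a (p+j))"
  proof -
    have "(2::real)^(p+j) + 1 \<le> 2 * 2^p * 2^j"
      using one_le_power[of "2::real" "p+j"] by (simp add: power_add mult.commute)
    then show ?thesis using assms(2) by (intro mult_left_mono mult_right_mono) (auto simp: ahat_nonneg)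
  qed
  also have "\<dots> = 2 * 2^p * C * ahat a (p + j)"
    by simp
  finally show ?thesis .
qed

lemma GMbar_if_dyadic_block_le_ahat:
  assumes "C > 0" "\<And>n. \<exists>k\<ge>n. (\<Sum>m\<in>dyadic_block n. absDelta a m) \<le> C * ahat a k"
  shows "GMbar a"
  unfolding GMbar_def
proof (intro exI[of _ C] conjI allI)
  fix n
  obtain k where "k \<ge> n" and block_le: "(\<Sum>m\<in>dyadic_block n. absDelta a m) \<le> C * ahat a k"
    using assms(2) by blast
  have "min 1 ((2::real) powr (real k - real n)) = 1"
    using \<open>k \<ge> n\<close> by (simp add: ge_one_powr_ge_zero)
  then have "ereal (C * ahat a k) = ereal C * ereal (min 1 ((2::real) powr (real k - real n)) * ahat a k)"
    by simp
  also have "\<dots> \<le> ereal C * (SUP k. ereal (min 1 ((2::real) powr (real k - real n)) * ahat a k))"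
    using \<open>C > 0\<close> by (intro ereal_mult_left_mono SUP_upper) auto
  finally have "ereal (C * ahat a k)
      \<le> ereal C * (SUP k. ereal (min 1 ((2::real) powr (real k - real n)) * ahat a k))" .
  with block_le show "ereal (\<Sum>m\<in>{m. \<lfloor>(2::real) powr (real n - 1)\<rfloor> \<le> \<bar>m\<bar> \<and> \<bar>m\<bar> < 2^n}. absDelta a m)
      \<le> ereal C * (SUP k. ereal (min 1 ((2::real) powr (real k - real n)) * ahat a k))"
    unfolding dyadic_block_def by (meson ereal_less_eq(3) order_trans)
qed (use assms(1) in simp)

theorem mainTheorem13:
  fixes a :: "int \<Rightarrow> complex" and \<alpha> \<beta> :: real
  assumes "0 \<le> \<alpha>" "\<alpha> < 2 * pi" "0 \<le> \<beta>" "\<beta> < pi / 2"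
    and "\<And>k. k \<le> 0 \<Longrightarrow> a k = 0"
    and "GM (\<lambda>k::nat. a (int k))"
    and "\<And>k. k \<ge> 1 \<Longrightarrow> a k \<in> sector \<alpha> \<beta>"
  shows "GMbar a"
proof -
  have "a (int k) \<in> sector \<alpha> \<beta>" if "k \<ge> 1" for k :: nat
    using assms(7) that by simp
  then obtain C p where "C > 0" "p > 0" and GM_block: "\<And>n. n \<ge> 1 \<Longrightarrow>
      (\<Sum>k=n..2*n. cmod (a (int k) - a (int (k+1)))) \<le> C / real n * cmod (\<Sum>k=1..2^p*n. a (int k))"
    using GM_sector_block_bound[OF assms(6) _ assms(3,4)] by blast
  define C' where "C' = max 2 (2 * 2^p * C)"
  show ?thesis
  proof (rule GMbar_if_dyadic_block_le_ahat)
    show "C' > 0" by (simp add: C'_def)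
    fix n
    show "\<exists>k\<ge>n. (\<Sum>m\<in>dyadic_block n. absDelta a m) \<le> C' * ahat a k"
    proof (cases n)
      case 0
      have "(\<Sum>m\<in>dyadic_block n. absDelta a m) \<le> 2 * ahat a 0"
        unfolding 0 by (rule sum_absDelta_dyadic_block_0_le_ahat[OF assms(5)])
      also have "\<dots> \<le> C' * ahat a 0"
        by (intro mult_right_mono) (auto simp: C'_def ahat_nonneg)
      finally show ?thesis using 0 by blast
    next
      case (Suc j)
      have "(\<Sum>m\<in>dyadic_block n. absDelta a m) \<le> 2 * 2^p * C * ahat a (p + j)"
        unfolding Suc using GM_block[of "2^j"] \<open>C > 0\<close>
        by (intro sum_absDelta_dyadic_block_Suc_le_ahat[OF assms(5)]) auto
      also have "\<dots> \<le> C' * ahat a (p + j)"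
        by (intro mult_right_mono) (auto simp: C'_def ahat_nonneg)
      finally show ?thesis using Suc \<open>p > 0\<close> by (intro exI[of _ "p + j"]) auto
    qed
  qed
qed

end
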